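(* If a symmetric restaking network $G$ admits a profitable attack, then it admits a profitable attack that is consolidated.
   Context: A restaking network is a tuple $G=(V,S,\sigma,w,\theta,\pi)$ with finite nonempty validator set $V$, finite service set $S$, stake $\sigma:V\to\mathbb{R}_{>0}$, allocation $w:V\times S\to\mathbb{R}_{\ge0}$ with $w(v,s)\le\sigma(v)$, thresholds $\theta:S\to[0,1]$, prizes $\pi:S\to\mathbb{R}_{>0}$. An attack is $\alpha:V\times S\to\mathbb{R}_{\ge0}$ with $\alpha(v,s)\le w(v,s)$; attacked services $S_\alpha=\{s:\sum_v\alpha(v,s)\ge\theta(s)\sum_v w(v,s)\}$; validator cost $c_v(\alpha)=\min(\sigma(v),\sum_{s\in S_\alpha}\alpha(v,s))$; total cost $C(\alpha)=\sum_vc_v(\alpha)$; prize $\Pi(\alpha)=\sum_{s\in S_\alpha}\pi(s)$. Profitable: $S_\alpha\ne\emptyset$ and $C(\alpha)\le\Pi(\alpha)$. $G$ is symmetric if all validators have the same stake $\sigma$, for each $s$ all validators have the same allocation $w(s)$, and all services have the same threshold $\theta$. Let $m=|V|$ and $V=\{v_1,\dots,v_m\}$ (any ordering). An attack is consolidated if for every $s\in S_\alpha$ and $i\in\{1,\dots,m\}$: $\alpha(v_i,s)=w(s)$ if $i\le\lfloor\theta m\rfloor$; $\alpha(v_i,s)=(\theta m-\lfloor\theta m\rfloor)w(s)$ if $i=\lfloor\theta m\rfloor+1$; $\alpha(v_i,s)=0$ otherwise. *)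

theory Defs
  imports Complex_Main
begin

text \<open>A restaking network over validator set V and service set S.
  stake, alloc, thr, prize are the maps sigma, w, theta, pi.\<close>

definition restaking_network ::
  "'v set \<Rightarrow> 's set \<Rightarrow> ('v \<Rightarrow> real) \<Rightarrow> ('v \<Rightarrow> 's \<Rightarrow> real) \<Rightarrow> ('s \<Rightarrow> real) \<Rightarrow> ('s \<Rightarrow> real) \<Rightarrow> bool"
  where "restaking_network V S \<sigma> w \<theta> \<pi> \<longleftrightarrow>
     finite V \<and> V \<noteq> {} \<and> finite S \<and>
     (\<forall>v\<in>V. \<sigma> v > 0) \<and>
     (\<forall>v\<in>V. \<forall>s\<in>S. 0 \<le> w v s \<and> w v s \<le> \<sigma> v) \<and>
     (\<forall>s\<in>S. 0 \<le> \<theta> s \<and> \<theta> s \<le> 1) \<and>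
     (\<forall>s\<in>S. \<pi> s > 0)"

definition is_attack ::
  "'v set \<Rightarrow> 's set \<Rightarrow> ('v \<Rightarrow> 's \<Rightarrow> real) \<Rightarrow> ('v \<Rightarrow> 's \<Rightarrow> real) \<Rightarrow> bool"
  where "is_attack V S w \<alpha> \<longleftrightarrow> (\<forall>v\<in>V. \<forall>s\<in>S. 0 \<le> \<alpha> v s \<and> \<alpha> v s \<le> w v s)"

definition attacked ::
  "'v set \<Rightarrow> 's set \<Rightarrow> ('v \<Rightarrow> 's \<Rightarrow> real) \<Rightarrow> ('s \<Rightarrow> real) \<Rightarrow> ('v \<Rightarrow> 's \<Rightarrow> real) \<Rightarrow> 's set"
  where "attacked V S w \<theta> \<alpha> = {s\<in>S. (\<Sum>v\<in>V. \<alpha> v s) \<ge> \<theta> s * (\<Sum>v\<in>V. w v s)}"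

definition attack_cost ::
  "'v set \<Rightarrow> 's set \<Rightarrow> ('v \<Rightarrow> real) \<Rightarrow> ('v \<Rightarrow> 's \<Rightarrow> real) \<Rightarrow> ('s \<Rightarrow> real) \<Rightarrow> ('v \<Rightarrow> 's \<Rightarrow> real) \<Rightarrow> real"
  where "attack_cost V S \<sigma> w \<theta> \<alpha> =
     (\<Sum>v\<in>V. min (\<sigma> v) (\<Sum>s\<in>attacked V S w \<theta> \<alpha>. \<alpha> v s))"

definition attack_prize ::
  "'v set \<Rightarrow> 's set \<Rightarrow> ('v \<Rightarrow> 's \<Rightarrow> real) \<Rightarrow> ('s \<Rightarrow> real) \<Rightarrow> ('s \<Rightarrow> real) \<Rightarrow> ('v \<Rightarrow> 's \<Rightarrow> real) \<Rightarrow> real"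
  where "attack_prize V S w \<theta> \<pi> \<alpha> = (\<Sum>s\<in>attacked V S w \<theta> \<alpha>. \<pi> s)"

definition profitable ::
  "'v set \<Rightarrow> 's set \<Rightarrow> ('v \<Rightarrow> real) \<Rightarrow> ('v \<Rightarrow> 's \<Rightarrow> real) \<Rightarrow> ('s \<Rightarrow> real) \<Rightarrow> ('s \<Rightarrow> real) \<Rightarrow> ('v \<Rightarrow> 's \<Rightarrow> real) \<Rightarrow> bool"
  where "profitable V S \<sigma> w \<theta> \<pi> \<alpha> \<longleftrightarrow>
     is_attack V S w \<alpha> \<and> attacked V S w \<theta> \<alpha> \<noteq> {} \<and>
     attack_cost V S \<sigma> w \<theta> \<alpha> \<le> attack_prize V S w \<theta> \<pi> \<alpha>"

definition symmetric_network ::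
  "'v set \<Rightarrow> 's set \<Rightarrow> ('v \<Rightarrow> real) \<Rightarrow> ('v \<Rightarrow> 's \<Rightarrow> real) \<Rightarrow> ('s \<Rightarrow> real) \<Rightarrow> bool"
  where "symmetric_network V S \<sigma> w \<theta> \<longleftrightarrow>
     (\<forall>u\<in>V. \<forall>v\<in>V. \<sigma> u = \<sigma> v) \<and>
     (\<forall>s\<in>S. \<forall>u\<in>V. \<forall>v\<in>V. w u s = w v s) \<and>
     (\<forall>s\<in>S. \<forall>t\<in>S. \<theta> s = \<theta> t)"

definition consolidated ::
  "'v set \<Rightarrow> 's set \<Rightarrow> ('v \<Rightarrow> 's \<Rightarrow> real) \<Rightarrow> ('s \<Rightarrow> real) \<Rightarrow> (nat \<Rightarrow> 'v) \<Rightarrow> ('v \<Rightarrow> 's \<Rightarrow> real) \<Rightarrow> bool"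
  where "consolidated V S w \<theta> vs \<alpha> \<longleftrightarrow>
     (\<forall>s\<in>attacked V S w \<theta> \<alpha>. \<forall>i\<in>{1..card V}.
        \<alpha> (vs i) s =
          (if i \<le> nat \<lfloor>\<theta> s * real (card V)\<rfloor> then w (vs i) s
           else if i = nat \<lfloor>\<theta> s * real (card V)\<rfloor> + 1
             then (\<theta> s * real (card V) - of_int \<lfloor>\<theta> s * real (card V)\<rfloor>) * w (vs i) s
           else 0))"

end

theory Submission
  imports Defs
begin

text \<open>In a symmetric network every validator has the same stake and allocations, so the cost of an
  attack on a service set A depends only on how much of its total allocation W each validator
  commits. With threshold \<theta> and m validators, any attack on A commits at least \<theta> m W in total,
  spread over validators each committing at most W; since each validator pays at most its stake,
  the cost is smallest when this mass is packed into as few validators as possible, which is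
  exactly the consolidated attack on A. It attacks every service of A, hence wins at least the
  same prize at no greater cost.\<close>

text \<open>The fraction of its allocation that the i-th validator (counting from 1) commits when the
  attack needs t full allocations in total.\<close>

definition consolidated_share :: "real \<Rightarrow> nat \<Rightarrow> real" where
  "consolidated_share t i =
     (if i \<le> nat \<lfloor>t\<rfloor> then 1 else if i = nat \<lfloor>t\<rfloor> + 1 then frac t else 0)"

lemma consolidated_share_bounds: "0 \<le> consolidated_share t i" "consolidated_share t i \<le> 1"
  using frac_lt_1[of t] by (auto simp: consolidated_share_def)

lemma consolidated_share_zero: "1 \<le> i \<Longrightarrow> consolidated_share 0 i = 0"
  by (simp add: consolidated_share_def)

lemma sum_step_profile:
  fixes a b :: real
  shows "(\<Sum>i=1..m. if i \<le> k then a else if i = Suc k then b else 0) =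
         (if k < m then real k * a + b else real m * a)"
  by (induction m) (auto simp: sum.cl_ivl_Suc algebra_simps)

lemma sum_consolidated_share_comp:
  fixes g :: "real \<Rightarrow> real"
  assumes "g 0 = 0" "0 \<le> t" "t \<le> real m"
  shows "(\<Sum>i=1..m. g (consolidated_share t i)) = real (nat \<lfloor>t\<rfloor>) * g 1 + g (frac t)"
proof -
  define k where "k = nat \<lfloor>t\<rfloor>"
  have "(\<Sum>i=1..m. g (consolidated_share t i)) =
        (\<Sum>i=1..m. if i \<le> k then g 1 else if i = Suc k then g (frac t) else 0)"
    using assms(1) by (intro sum.cong) (auto simp: consolidated_share_def k_def)
  also have "\<dots> = (if k < m then real k * g 1 + g (frac t) else real m * g 1)"
    by (rule sum_step_profile)
  also have "\<dots> = real k * g 1 + g (frac t)"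
  proof (cases "k < m")
    case False
    have "\<lfloor>t\<rfloor> \<le> int m" using assms(3) by (metis floor_mono floor_of_nat)
    moreover have "0 \<le> \<lfloor>t\<rfloor>" using assms(2) by simp
    ultimately have "\<lfloor>t\<rfloor> = int m" using False unfolding k_def by linarith
    then have "k = m" "t = real m" using assms(3) le_floor_iff[of "int m" t] by (auto simp: k_def)
    then show ?thesis using assms(1) by (simp add: frac_def)
  qed simp
  finally show ?thesis unfolding k_def .
qed

lemma sum_consolidated_share:
  assumes "0 \<le> t" "t \<le> real m"
  shows "(\<Sum>i=1..m. consolidated_share t i) = t"
  using sum_consolidated_share_comp[of id t m] assms by (simp add: frac_def)

text \<open>Capping at \<sigma> loses least when the mass is concentrated: either at least k + 1 summands
  reach \<sigma>, or the remaining ones carry all the mass except at most W per saturated summand.\<close>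

lemma sum_min_cap_lower_bound:
  fixes x :: "'v \<Rightarrow> real"
  assumes "finite V" "\<forall>v\<in>V. 0 \<le> x v \<and> x v \<le> W" "0 \<le> W" "0 < \<sigma>" "0 \<le> f" "f \<le> 1"
    and mass: "(real k + f) * W \<le> (\<Sum>v\<in>V. x v)"
  shows "real k * min \<sigma> W + min \<sigma> (f * W) \<le> (\<Sum>v\<in>V. min \<sigma> (x v))"
proof (cases "W \<le> \<sigma>")
  case True
  have "f * W \<le> W" using assms(3,5,6) by (simp add: mult_left_le_one_le)
  with True have "min \<sigma> W = W" "min \<sigma> (f * W) = f * W" by auto
  moreover have "(\<Sum>v\<in>V. min \<sigma> (x v)) = (\<Sum>v\<in>V. x v)"
    using assms(2) True by (intro sum.cong) auto
  ultimately show ?thesis using mass by (simp add: algebra_simps)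
next
  case False
  define Sa where "Sa = {v\<in>V. \<sigma> \<le> x v}"
  have Sa: "finite Sa" "Sa \<subseteq> V" using assms(1) by (auto simp: Sa_def)
  have "(\<Sum>v\<in>V. min \<sigma> (x v)) = (\<Sum>v\<in>V-Sa. min \<sigma> (x v)) + (\<Sum>v\<in>Sa. min \<sigma> (x v))"
    using sum.subset_diff[OF Sa(2) assms(1)] by simp
  also have "\<dots> = (\<Sum>v\<in>V-Sa. x v) + real (card Sa) * \<sigma>"
    by (auto intro!: arg_cong2[where f = "(+)"] sum.cong simp: Sa_def)
  finally have capped: "(\<Sum>v\<in>V. min \<sigma> (x v)) = (\<Sum>v\<in>V-Sa. x v) + real (card Sa) * \<sigma>" .
  have "(\<Sum>v\<in>V. x v) = (\<Sum>v\<in>V-Sa. x v) + (\<Sum>v\<in>Sa. x v)"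
    using sum.subset_diff[OF Sa(2) assms(1)] .
  moreover have "(\<Sum>v\<in>Sa. x v) \<le> real (card Sa) * W"
    using sum_bounded_above[of Sa x W] Sa assms(2) by auto
  ultimately have unsaturated: "(real k + f) * W - real (card Sa) * W \<le> (\<Sum>v\<in>V-Sa. x v)"
    using mass by linarith
  have unsaturated_nonneg: "0 \<le> (\<Sum>v\<in>V-Sa. x v)" using assms(2) by (intro sum_nonneg) auto
  show ?thesis
  proof (cases "k < card Sa")
    case True
    then have "(real k + 1) * \<sigma> \<le> real (card Sa) * \<sigma>"
      using assms(4) by (intro mult_right_mono) auto
    then show ?thesis using False capped unsaturated_nonneg by (simp add: algebra_simps)
  next
    case False
    then have "0 \<le> (real k - real (card Sa)) * (W - \<sigma>)"
      using \<open>\<not> W \<le> \<sigma>\<close> by (intro mult_nonneg_nonneg) auto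
    then show ?thesis using \<open>\<not> W \<le> \<sigma>\<close> capped unsaturated
      by (simp add: algebra_simps min_def split: if_splits)
  qed
qed

lemma attack_prize_mono:
  assumes "finite S" "\<forall>s\<in>S. 0 < \<pi> s"
    and "attacked V S w \<theta> \<alpha> \<subseteq> attacked V S w \<theta> \<beta>"
  shows "attack_prize V S w \<theta> \<pi> \<alpha> \<le> attack_prize V S w \<theta> \<pi> \<beta>"
proof -
  have "attacked V S w \<theta> \<beta> \<subseteq> S" by (auto simp: attacked_def)
  then show ?thesis unfolding attack_prize_def
    using assms by (intro sum_mono2) (auto intro: finite_subset less_imp_le)
qed

lemma consolidated_iff_share:
  "consolidated V S w \<theta> vs \<alpha> \<longleftrightarrow>
     (\<forall>s\<in>attacked V S w \<theta> \<alpha>. \<forall>i\<in>{1..card V}.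
        \<alpha> (vs i) s = consolidated_share (\<theta> s * real (card V)) i * w (vs i) s)"
  unfolding consolidated_def consolidated_share_def frac_def by simp

locale symmetric_restaking =
  fixes V :: "'v set" and S :: "'s set"
    and \<sigma> :: "'v \<Rightarrow> real" and w :: "'v \<Rightarrow> 's \<Rightarrow> real"
    and \<theta> :: "'s \<Rightarrow> real" and \<pi> :: "'s \<Rightarrow> real"
    and vs :: "nat \<Rightarrow> 'v"
    and \<sigma>0 :: real and \<omega> :: "'s \<Rightarrow> real" and \<theta>0 :: real
  assumes network: "restaking_network V S \<sigma> w \<theta> \<pi>"
    and enumeration: "bij_betw vs {1..card V} V"
    and stake_eq: "v \<in> V \<Longrightarrow> \<sigma> v = \<sigma>0"
    and alloc_eq: "v \<in> V \<Longrightarrow> s \<in> S \<Longrightarrow> w v s = \<omega> s"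
    and thr_eq: "s \<in> S \<Longrightarrow> \<theta> s = \<theta>0"
    and thr_nonneg: "0 \<le> \<theta>0"
    and thr_le_1: "\<theta>0 \<le> 1"
begin

lemma finite_V: "finite V" and V_nonempty: "V \<noteq> {}" and finite_S: "finite S"
  using network by (auto simp: restaking_network_def)

lemma stake_pos: "0 < \<sigma>0"
  using network V_nonempty stake_eq by (force simp: restaking_network_def)

lemma alloc_nonneg: "s \<in> S \<Longrightarrow> 0 \<le> \<omega> s"
  using network V_nonempty alloc_eq by (force simp: restaking_network_def)

lemma threshold_total: "0 \<le> \<theta>0 * real (card V)" "\<theta>0 * real (card V) \<le> real (card V)"
  using thr_nonneg thr_le_1 by (auto simp: mult_left_le_one_le)

lemma sum_alloc: "s \<in> S \<Longrightarrow> (\<Sum>v\<in>V. w v s) = real (card V) * \<omega> s"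
  by (simp add: alloc_eq)

definition rank :: "'v \<Rightarrow> nat" where
  "rank = the_inv_into {1..card V} vs"

lemma rank_vs: "i \<in> {1..card V} \<Longrightarrow> rank (vs i) = i"
  unfolding rank_def using the_inv_into_f_f[OF bij_betw_imp_inj_on[OF enumeration]] .

lemma sum_rank: "(\<Sum>v\<in>V. g (rank v)) = (\<Sum>i=1..card V. g i)"
  unfolding rank_def using sum.reindex_bij_betw[OF bij_betw_the_inv_into[OF enumeration]] .

definition consolidate :: "'s set \<Rightarrow> 'v \<Rightarrow> 's \<Rightarrow> real" where
  "consolidate A v s =
     (if s \<in> A then consolidated_share (\<theta>0 * real (card V)) (rank v) * \<omega> s else 0)"

lemma is_attack_consolidate: "is_attack V S w (consolidate A)"
  unfolding is_attack_def consolidate_def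
  using consolidated_share_bounds alloc_nonneg alloc_eq
  by (auto intro: mult_left_le_one_le)

lemma sum_consolidate:
  assumes "s \<in> A"
  shows "(\<Sum>v\<in>V. consolidate A v s) = \<theta>0 * real (card V) * \<omega> s"
proof -
  have "(\<Sum>v\<in>V. consolidate A v s) = (\<Sum>i=1..card V. consolidated_share (\<theta>0 * real (card V)) i) * \<omega> s"
    using assms by (simp add: consolidate_def sum_rank flip: sum_distrib_right)
  also have "\<dots> = \<theta>0 * real (card V) * \<omega> s"
    using sum_consolidated_share threshold_total by simp
  finally show ?thesis .
qed

lemma subset_attacked_consolidate:
  assumes "A \<subseteq> S"
  shows "A \<subseteq> attacked V S w \<theta> (consolidate A)"
  using assms by (auto simp: attacked_def sum_consolidate sum_alloc thr_eq)

lemma sum_consolidate_attacked: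
  assumes "A \<subseteq> S"
  shows "(\<Sum>s\<in>attacked V S w \<theta> (consolidate A). consolidate A v s) =
         consolidated_share (\<theta>0 * real (card V)) (rank v) * (\<Sum>s\<in>A. \<omega> s)"
proof -
  have "finite (attacked V S w \<theta> (consolidate A))"
    using finite_S by (auto simp: attacked_def)
  then have "(\<Sum>s\<in>attacked V S w \<theta> (consolidate A). consolidate A v s) = (\<Sum>s\<in>A. consolidate A v s)"
    using subset_attacked_consolidate[OF assms]
    by (intro sum.mono_neutral_right) (auto simp: consolidate_def)
  then show ?thesis by (simp add: consolidate_def sum_distrib_left)
qed

definition consolidated_cost :: "real \<Rightarrow> real" where
  "consolidated_cost W =
     real (nat \<lfloor>\<theta>0 * real (card V)\<rfloor>) * min \<sigma>0 W + min \<sigma>0 (frac (\<theta>0 * real (card V)) * W)"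

lemma attack_cost_consolidate:
  assumes "A \<subseteq> S"
  shows "attack_cost V S \<sigma> w \<theta> (consolidate A) = consolidated_cost (\<Sum>s\<in>A. \<omega> s)"
proof -
  let ?t = "\<theta>0 * real (card V)" and ?W = "\<Sum>s\<in>A. \<omega> s"
  have "attack_cost V S \<sigma> w \<theta> (consolidate A) = (\<Sum>v\<in>V. min \<sigma>0 (consolidated_share ?t (rank v) * ?W))"
    unfolding attack_cost_def using assms by (simp add: stake_eq sum_consolidate_attacked)
  also have "\<dots> = (\<Sum>i=1..card V. min \<sigma>0 (consolidated_share ?t i * ?W))"
    by (rule sum_rank)
  also have "\<dots> = consolidated_cost ?W"
    using sum_consolidated_share_comp[of "\<lambda>x. min \<sigma>0 (x * ?W)"] stake_pos threshold_total
    by (simp add: consolidated_cost_def)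
  finally show ?thesis .
qed

lemma attack_cost_lower_bound:
  assumes "is_attack V S w \<alpha>"
  shows "consolidated_cost (\<Sum>s\<in>attacked V S w \<theta> \<alpha>. \<omega> s) \<le> attack_cost V S \<sigma> w \<theta> \<alpha>"
proof -
  define A where "A = attacked V S w \<theta> \<alpha>"
  define x where "x v = (\<Sum>s\<in>A. \<alpha> v s)" for v
  define W where "W = (\<Sum>s\<in>A. \<omega> s)"
  let ?t = "\<theta>0 * real (card V)"
  have A_sub: "A \<subseteq> S" by (auto simp: A_def attacked_def)
  have x_bounds: "\<forall>v\<in>V. 0 \<le> x v \<and> x v \<le> W"
    using assms A_sub unfolding x_def W_def is_attack_def
    by (auto intro!: sum_nonneg sum_mono simp: alloc_eq subset_iff)
  have "(real (nat \<lfloor>?t\<rfloor>) + frac ?t) * W = (\<Sum>s\<in>A. \<theta> s * (\<Sum>v\<in>V. w v s))"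
    using threshold_total A_sub unfolding W_def
    by (auto simp: frac_def sum_distrib_left thr_eq sum_alloc subset_iff intro!: sum.cong)
  also have "\<dots> \<le> (\<Sum>s\<in>A. \<Sum>v\<in>V. \<alpha> v s)"
    by (intro sum_mono) (auto simp: A_def attacked_def)
  also have "\<dots> = (\<Sum>v\<in>V. x v)"
    unfolding x_def by (rule sum.swap)
  finally have "consolidated_cost W \<le> (\<Sum>v\<in>V. min \<sigma>0 (x v))"
    unfolding consolidated_cost_def
    using sum_min_cap_lower_bound[OF finite_V x_bounds _ stake_pos] x_bounds V_nonempty
      frac_lt_1[of ?t] by fastforce
  then show ?thesis
    by (simp add: attack_cost_def stake_eq A_def x_def W_def)
qed

lemma consolidated_consolidate:
  assumes "A \<subseteq> S"
  shows "consolidated V S w \<theta> vs (consolidate A)"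
  unfolding consolidated_iff_share
proof (intro ballI)
  fix s i
  assume s: "s \<in> attacked V S w \<theta> (consolidate A)" and i: "i \<in> {1..card V}"
  have "s \<in> S" using s by (simp add: attacked_def)
  have "vs i \<in> V" using bij_betw_apply[OF enumeration i] .
  show "consolidate A (vs i) s = consolidated_share (\<theta> s * real (card V)) i * w (vs i) s"
  proof (cases "s \<in> A")
    case True
    then show ?thesis
      using \<open>s \<in> S\<close> \<open>vs i \<in> V\<close> by (simp add: consolidate_def rank_vs[OF i] thr_eq alloc_eq)
  next
    case False
    text \<open>A service outside A is attacked with zero stake, so it demands none.\<close>
    then have "\<theta>0 * (real (card V) * \<omega> s) \<le> 0"
      using s \<open>s \<in> S\<close> by (simp add: attacked_def consolidate_def thr_eq sum_alloc)
    moreover have "0 \<le> \<theta>0 * (real (card V) * \<omega> s)"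
      using thr_nonneg alloc_nonneg[OF \<open>s \<in> S\<close>] by simp
    ultimately have "\<theta>0 * (real (card V) * \<omega> s) = 0" by linarith
    then have "\<theta>0 = 0 \<or> \<omega> s = 0" using finite_V V_nonempty by simp
    then show ?thesis
      using False i \<open>s \<in> S\<close> \<open>vs i \<in> V\<close>
      by (auto simp: consolidate_def thr_eq alloc_eq consolidated_share_zero)
  qed
qed

lemma profitable_consolidate:
  assumes "profitable V S \<sigma> w \<theta> \<pi> \<alpha>"
  shows "profitable V S \<sigma> w \<theta> \<pi> (consolidate (attacked V S w \<theta> \<alpha>))"
proof -
  let ?A = "attacked V S w \<theta> \<alpha>"
  have "?A \<subseteq> S" by (auto simp: attacked_def)
  have "attack_cost V S \<sigma> w \<theta> (consolidate ?A) \<le> attack_cost V S \<sigma> w \<theta> \<alpha>"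
    using attack_cost_consolidate[OF \<open>?A \<subseteq> S\<close>] attack_cost_lower_bound assms
    by (simp add: profitable_def)
  moreover have "attack_prize V S w \<theta> \<pi> \<alpha> \<le> attack_prize V S w \<theta> \<pi> (consolidate ?A)"
    using network finite_S subset_attacked_consolidate[OF \<open>?A \<subseteq> S\<close>]
    by (intro attack_prize_mono) (auto simp: restaking_network_def)
  moreover have "attacked V S w \<theta> (consolidate ?A) \<noteq> {}"
    using subset_attacked_consolidate[OF \<open>?A \<subseteq> S\<close>] assms by (auto simp: profitable_def)
  ultimately show ?thesis
    using assms is_attack_consolidate by (auto simp: profitable_def)
qed

end

lemma symmetric_restakingI:
  assumes "restaking_network V S \<sigma> w \<theta> \<pi>" "symmetric_network V S \<sigma> w \<theta>"
    and "bij_betw vs {1..card V} V" "v0 \<in> V" "s0 \<in> S"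
  shows "symmetric_restaking V S \<sigma> w \<theta> \<pi> vs (\<sigma> v0) (w v0) (\<theta> s0)"
proof
  show "\<sigma> v = \<sigma> v0" if "v \<in> V" for v
    using assms(2,4) that unfolding symmetric_network_def by blast
  show "w v s = w v0 s" if "v \<in> V" "s \<in> S" for v s
    using assms(2,4) that unfolding symmetric_network_def by blast
  show "\<theta> s = \<theta> s0" if "s \<in> S" for s
    using assms(2,5) that unfolding symmetric_network_def by blast
  show "0 \<le> \<theta> s0" "\<theta> s0 \<le> 1"
    using assms(1,5) by (simp_all add: restaking_network_def)
qed (use assms(1,3) in auto)

theorem mainTheorem12:
  fixes V :: "'v set" and S :: "'s set"
    and \<sigma> :: "'v \<Rightarrow> real" and w :: "'v \<Rightarrow> 's \<Rightarrow> real"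
    and \<theta> :: "'s \<Rightarrow> real" and \<pi> :: "'s \<Rightarrow> real"
    and vs :: "nat \<Rightarrow> 'v"
  assumes "restaking_network V S \<sigma> w \<theta> \<pi>"
    and "symmetric_network V S \<sigma> w \<theta>"
    and "bij_betw vs {1..card V} V"
    and "\<exists>\<alpha>. profitable V S \<sigma> w \<theta> \<pi> \<alpha>"
  shows "\<exists>\<alpha>. profitable V S \<sigma> w \<theta> \<pi> \<alpha> \<and> consolidated V S w \<theta> vs \<alpha>"
proof -
  obtain \<alpha> where \<alpha>: "profitable V S \<sigma> w \<theta> \<pi> \<alpha>" using assms(4) by blast
  obtain s0 where "s0 \<in> S" using \<alpha> by (auto simp: profitable_def attacked_def)
  obtain v0 where "v0 \<in> V" using assms(1) by (auto simp: restaking_network_def)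
  interpret symmetric_restaking V S \<sigma> w \<theta> \<pi> vs "\<sigma> v0" "w v0" "\<theta> s0"
    by (rule symmetric_restakingI[OF assms(1-3) \<open>v0 \<in> V\<close> \<open>s0 \<in> S\<close>])
  have "attacked V S w \<theta> \<alpha> \<subseteq> S" by (auto simp: attacked_def)
  then show ?thesis using profitable_consolidate[OF \<alpha>] consolidated_consolidate by blast
qed

end
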